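(* Let $T\subset\mathbb{R}^d$ be compact (with positive Lebesgue measure) and let $C:T\times T\to\mathbb{R}$ be a symmetric positive semidefinite kernel that is $\alpha$-Hölder continuous in each coordinate: there exist $M_C>0$ and $\alpha\in(0,1]$ with $|C(t_1,s)-C(t_2,s)|\le M_C|t_1-t_2|^{\alpha}$ for all $t_1,t_2,s\in T$. Let $\{(\lambda_j,\phi_j)\}$ be the eigenpairs of the integral operator of $C$ on $L^2(T)$ (so $C(s,t)=\sum_j\lambda_j\phi_j(s)\phi_j(t)$ with continuous $\phi_j$), and let $Z(t)=\sum_j\sqrt{\lambda_j}Z_j\phi_j(t)$, $t\in T$ (series converging in $L^2(\Omega)$ for each $t$), with $Z_j$ i.i.d. Laplace of mean $0$ and variance $1$; this is an ICLP with covariance function $C$. Then there exists a process $\tilde Z:T\times\Omega\to\mathbb{R}$ such that (1) for every $\omega\in\Omega$, $t\mapsto\tilde Z_\omega(t)$ is continuous on $T$, and (2) for every $t\in T$, $P(\tilde Z(t)=Z(t))=1$.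
   Context: The Laplace distribution with mean 0 and variance 1 has density $\frac1{\sqrt2}e^{-\sqrt2|x|}$. *)

theory Defs
  imports "HOL-Probability.Probability"
begin

definition psd_kernel :: "'a set \<Rightarrow> ('a \<Rightarrow> 'a \<Rightarrow> real) \<Rightarrow> bool" where
  "psd_kernel T C \<longleftrightarrow>
     (\<forall>(n::nat) (x::nat \<Rightarrow> 'a) (c::nat \<Rightarrow> real). (\<forall>i<n. x i \<in> T) \<longrightarrow>
        0 \<le> (\<Sum>i<n. \<Sum>j<n. c i * c j * C (x i) (x j)))"

definition laplace_density :: "real \<Rightarrow> real" where
  "laplace_density x = exp (- sqrt 2 * \<bar>x\<bar>) / sqrt 2"

end

theory Submission
  imports Defs
begin

text \<open>
  Each increment Z u - Z v is the L2-limit of finite sums of a_j Z_j over the Laplace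
  coefficients, with sum of a_j^2 = C u u - 2 C u v + C v v <= 2 M_C |u - v|^alpha.
  Since E exp (v Z_j) <= exp (v^2) for |v| <= 1, a Chernoff bound gives the sub-exponential
  tail P (|Z u - Z v| >= x) <= 2 e exp (- x / sigma) whenever 2 M_C |u - v|^alpha <= sigma^2,
  and this bound survives the passage to the L2-limit.

  For the chaining, approximate t by a point of T in its dyadic cube of side 2^-j. There are
  O(2^(d j)) such net points, so by the tail bound and Borel-Cantelli, almost surely all
  increments between nearby net points of level j are eventually below a summable sequence of
  thresholds. On that event the values along the nets converge uniformly, and their limit is a
  continuous modification of Z.
\<close>

section \<open>Tails of Laplace series\<close>

lemma nn_integral_exp_neg_Ici:
  fixes c :: real assumes c: "c > 0"
  shows "(\<integral>\<^sup>+x. ennreal (exp (- c * x)) * indicator {0..} x \<partial>lborel) = ennreal (1 / c)"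
proof -
  have "1 = (\<integral>\<^sup>+x. ennreal (x^0 * exp (-x)) * indicator {0 ..} x \<partial>lborel)"
    using nn_intergal_power_times_exp_Ici[of 0] by simp
  also have "\<dots> = ennreal \<bar>c\<bar> * (\<integral>\<^sup>+x. ennreal ((0 + c*x)^0 * exp (-(0 + c*x))) * indicator {0 ..} (0 + c*x) \<partial>lborel)"
    by (rule nn_integral_real_affine) (use c in auto)
  also have "(\<lambda>x. ennreal ((0 + c*x)^0 * exp (-(0 + c*x))) * indicator {0 ..} (0 + c*x))
        = (\<lambda>x. ennreal (exp (- c * x)) * indicator {0..} x)"
    using c by (auto simp: fun_eq_iff indicator_def zero_le_mult_iff)
  finally have "1 = ennreal c * (\<integral>\<^sup>+x. ennreal (exp (- c * x)) * indicator {0..} x \<partial>lborel)"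
    using c by simp
  then have "ennreal (1/c) * 1 = (ennreal (1/c) * ennreal c) * (\<integral>\<^sup>+x. ennreal (exp (- c * x)) * indicator {0..} x \<partial>lborel)"
    by (simp add: mult.assoc)
  also have "ennreal (1/c) * ennreal c = 1"
    using c by (simp flip: ennreal_mult)
  finally show ?thesis by simp
qed

lemma nn_integral_laplace_exp_Ici:
  fixes v :: real assumes v: "v < sqrt 2"
  shows "(\<integral>\<^sup>+x. ennreal (laplace_density x * exp (v * x)) * indicator {0..} x \<partial>lborel)
           = ennreal (1 / (sqrt 2 * (sqrt 2 - v)))"
proof -
  have "(\<integral>\<^sup>+x. ennreal (laplace_density x * exp (v * x)) * indicator {0..} x \<partial>lborel)
      = (\<integral>\<^sup>+x. ennreal (1 / sqrt 2) * (ennreal (exp (- (sqrt 2 - v) * x)) * indicator {0..} x) \<partial>lborel)"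
    by (intro nn_integral_cong)
       (auto simp: laplace_density_def indicator_def ennreal_mult'' [symmetric] mult_exp_exp algebra_simps)
  also have "\<dots> = ennreal (1 / sqrt 2) * (\<integral>\<^sup>+x. ennreal (exp (- (sqrt 2 - v) * x)) * indicator {0..} x \<partial>lborel)"
    by (rule nn_integral_cmult) auto
  also have "\<dots> = ennreal (1 / sqrt 2) * ennreal (1 / (sqrt 2 - v))"
    using v by (subst nn_integral_exp_neg_Ici) auto
  also have "\<dots> = ennreal (1 / (sqrt 2 * (sqrt 2 - v)))"
    using v by (simp flip: ennreal_mult)
  finally show ?thesis .
qed

lemma nn_integral_laplace_exp_le:
  fixes v :: real assumes v: "\<bar>v\<bar> < sqrt 2"
  shows "(\<integral>\<^sup>+x. ennreal (laplace_density x * exp (v * x)) \<partial>lborel) \<le> ennreal (2 / (2 - v\<^sup>2))"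
proof -
  define f where "f x = ennreal (laplace_density x * exp (v * x))" for x
  have [measurable]: "f \<in> borel_measurable borel"
    unfolding f_def laplace_density_def by measurable
  have reflect: "(\<integral>\<^sup>+x. f x * indicator {..0} x \<partial>lborel)
      = (\<integral>\<^sup>+x. ennreal (laplace_density x * exp (- v * x)) * indicator {0..} x \<partial>lborel)"
    using nn_integral_real_affine[of "\<lambda>x. f x * indicator {..0} x" "-1" 0]
    by (simp add: f_def laplace_density_def indicator_def)
  have "(\<integral>\<^sup>+x. f x \<partial>lborel) \<le> (\<integral>\<^sup>+x. f x * indicator {0..} x + f x * indicator {..0} x \<partial>lborel)"
    by (intro nn_integral_mono) (auto simp: indicator_def)
  also have "\<dots> = (\<integral>\<^sup>+x. f x * indicator {0..} x \<partial>lborel) + (\<integral>\<^sup>+x. f x * indicator {..0} x \<partial>lborel)"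
    by (intro nn_integral_add) auto
  also have "\<dots> = ennreal (1 / (sqrt 2 * (sqrt 2 - v))) + ennreal (1 / (sqrt 2 * (sqrt 2 + v)))"
    using v nn_integral_laplace_exp_Ici[of v] nn_integral_laplace_exp_Ici[of "- v"]
    unfolding reflect by (simp add: f_def)
  also have "\<dots> = ennreal (1 / (sqrt 2 * (sqrt 2 - v)) + 1 / (sqrt 2 * (sqrt 2 + v)))"
    using v by (intro ennreal_plus[symmetric]) auto
  also have "1 / (sqrt 2 * (sqrt 2 - v)) + 1 / (sqrt 2 * (sqrt 2 + v)) = 2 / (2 - v\<^sup>2)"
  proof -
    define r where "r = sqrt (2::real)"
    have pos: "0 < r - v" "0 < r + v" "0 < r" using v unfolding r_def by auto
    have "1 / (r * (r - v)) + 1 / (r * (r + v)) = 2 / ((r - v) * (r + v))"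
      using pos by (simp add: divide_simps)
    also have "(r - v) * (r + v) = 2 - v\<^sup>2"
      unfolding r_def by (simp add: algebra_simps power2_eq_square)
    finally show ?thesis by (simp only: r_def)
  qed
  finally show ?thesis unfolding f_def .
qed

lemma laplace_density_nonneg: "0 \<le> laplace_density x"
  by (simp add: laplace_density_def)

lemma laplace_mgf_le:
  fixes v :: real assumes v: "\<bar>v\<bar> \<le> 1"
  shows "(\<integral>\<^sup>+x. ennreal (laplace_density x) * ennreal (exp (v * x)) \<partial>lborel) \<le> ennreal (exp (v\<^sup>2))"
proof -
  have v2: "v\<^sup>2 \<le> 1"
    using v abs_le_square_iff[of v 1] by simp
  have "1 < sqrt (2::real)" by (rule real_less_rsqrt) simp
  with v have "\<bar>v\<bar> < sqrt 2" by linarith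
  have "(\<integral>\<^sup>+x. ennreal (laplace_density x) * ennreal (exp (v * x)) \<partial>lborel)
      = (\<integral>\<^sup>+x. ennreal (laplace_density x * exp (v * x)) \<partial>lborel)"
    by (simp add: ennreal_mult' laplace_density_nonneg)
  also have "\<dots> \<le> ennreal (2 / (2 - v\<^sup>2))"
    using \<open>\<bar>v\<bar> < sqrt 2\<close> by (rule nn_integral_laplace_exp_le)
  also have "\<dots> \<le> ennreal (exp (v\<^sup>2))"
  proof (rule ennreal_leI)
    have "0 \<le> v\<^sup>2 * (1 - v\<^sup>2)" using v2 by simp
    then have "2 \<le> (2 - v\<^sup>2) * (1 + v\<^sup>2)" by (simp add: algebra_simps)
    also have "\<dots> \<le> (2 - v\<^sup>2) * exp (v\<^sup>2)"
      using v2 by (intro mult_left_mono) (auto simp: exp_ge_add_one_self)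
    finally show "2 / (2 - v\<^sup>2) \<le> exp (v\<^sup>2)" using v2 by (simp add: divide_le_eq mult.commute)
  qed
  finally show ?thesis .
qed

lemma (in finite_measure) measure_le_add_of_subset_Un:
  "A \<subseteq> B \<union> C \<Longrightarrow> B \<in> sets M \<Longrightarrow> C \<in> sets M \<Longrightarrow> measure M A \<le> measure M B + measure M C"
  by (rule order.trans[OF finite_measure_mono measure_Un_le]) auto

lemma (in prob_space) laplace_sum_upper_tail:
  assumes indep: "indep_vars (\<lambda>_. borel) Zs UNIV"
    and lap: "\<forall>j. distributed M lborel (Zs j) (\<lambda>x. ennreal (laplace_density x))"
    and fin: "finite I" and \<sigma>: "0 < \<sigma>" and var: "(\<Sum>j\<in>I. (a j)\<^sup>2) \<le> \<sigma>\<^sup>2"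
  shows "prob {\<omega>\<in>space M. x \<le> (\<Sum>j\<in>I. a j * Zs j \<omega>)} \<le> exp 1 * exp (- x / \<sigma>)"
proof -
  define l where "l = 1 / \<sigma>"
  have l: "0 < l" using \<sigma> by (simp add: l_def)
  have [measurable]: "Zs j \<in> borel_measurable M" for j
    using indep unfolding indep_vars_def by auto
  have mgf: "(\<integral>\<^sup>+\<omega>. ennreal (exp (l * a j * Zs j \<omega>)) \<partial>M) \<le> ennreal (exp ((l * a j)\<^sup>2))"
    if j: "j \<in> I" for j
  proof -
    have "(a j)\<^sup>2 \<le> \<sigma>\<^sup>2"
      using member_le_sum[OF j _ fin, of "\<lambda>j. (a j)\<^sup>2"] var by simp
    then have "\<bar>a j\<bar> \<le> \<sigma>"
      using \<sigma> abs_le_square_iff[of "a j" \<sigma>] by simp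
    then have "\<bar>l * a j\<bar> \<le> 1"
      using \<sigma> by (simp add: l_def abs_mult)
    moreover have "(\<integral>\<^sup>+\<omega>. ennreal (exp (l * a j * Zs j \<omega>)) \<partial>M)
        = (\<integral>\<^sup>+y. ennreal (laplace_density y) * ennreal (exp ((l * a j) * y)) \<partial>lborel)"
      by (rule distributed_nn_integral[symmetric, OF lap[rule_format, of j]]) auto
    ultimately show ?thesis
      using laplace_mgf_le[of "l * a j"] by simp
  qed
  have exponent: "l\<^sup>2 * (\<Sum>j\<in>I. (a j)\<^sup>2) \<le> 1"
  proof -
    have "l\<^sup>2 * (\<Sum>j\<in>I. (a j)\<^sup>2) \<le> l\<^sup>2 * \<sigma>\<^sup>2" by (intro mult_left_mono var) simp
    also have "l\<^sup>2 * \<sigma>\<^sup>2 = 1" using \<sigma> by (simp add: l_def power_divide)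
    finally show ?thesis .
  qed
  have "emeasure M {\<omega>\<in>space M. x \<le> (\<Sum>j\<in>I. a j * Zs j \<omega>)}
      \<le> ennreal (exp (- l * x)) * (\<integral>\<^sup>+\<omega>. ennreal (exp (l * (\<Sum>j\<in>I. a j * Zs j \<omega>))) * indicator (space M) \<omega> \<partial>M)"
    by (intro Chernoff_ineq_nn_integral_ge l) auto
  also have "(\<integral>\<^sup>+\<omega>. ennreal (exp (l * (\<Sum>j\<in>I. a j * Zs j \<omega>))) * indicator (space M) \<omega> \<partial>M)
      = (\<integral>\<^sup>+\<omega>. (\<Prod>j\<in>I. ennreal (exp (l * a j * Zs j \<omega>))) \<partial>M)"
    by (intro nn_integral_cong) (simp add: sum_distrib_left exp_sum fin prod_ennreal mult.assoc)
  also have "\<dots> = (\<Prod>j\<in>I. \<integral>\<^sup>+\<omega>. ennreal (exp (l * a j * Zs j \<omega>)) \<partial>M)"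
    by (intro indep_vars_nn_integral fin indep_vars_compose2[OF indep_vars_subset[OF indep]]) auto
  also have "ennreal (exp (- l * x)) * \<dots> \<le> ennreal (exp (- l * x)) * (\<Prod>j\<in>I. ennreal (exp ((l * a j)\<^sup>2)))"
    by (intro mult_left_mono prod_mono_ennreal mgf) auto
  also have "(\<Prod>j\<in>I. ennreal (exp ((l * a j)\<^sup>2))) = ennreal (exp (l\<^sup>2 * (\<Sum>j\<in>I. (a j)\<^sup>2)))"
    by (simp add: prod_ennreal exp_sum[OF fin] sum_distrib_left power_mult_distrib)
  also have "ennreal (exp (- l * x)) * \<dots> \<le> ennreal (exp (- l * x)) * ennreal (exp 1)"
    using exponent by (intro mult_left_mono ennreal_leI) auto
  also have "\<dots> = ennreal (exp 1 * exp (- x / \<sigma>))"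
    by (simp add: l_def ennreal_mult'[symmetric] mult.commute)
  finally show ?thesis
    by (simp add: emeasure_eq_measure)
qed

lemma (in prob_space) laplace_sum_abs_tail:
  assumes indep: "indep_vars (\<lambda>_. borel) Zs UNIV"
    and lap: "\<forall>j. distributed M lborel (Zs j) (\<lambda>x. ennreal (laplace_density x))"
    and fin: "finite I" and \<sigma>: "0 < \<sigma>" and var: "(\<Sum>j\<in>I. (a j)\<^sup>2) \<le> \<sigma>\<^sup>2"
  shows "prob {\<omega>\<in>space M. x \<le> \<bar>\<Sum>j\<in>I. a j * Zs j \<omega>\<bar>} \<le> 2 * exp 1 * exp (- x / \<sigma>)"
proof -
  have [measurable]: "Zs j \<in> borel_measurable M" for j
    using indep unfolding indep_vars_def by auto
  have "{\<omega>\<in>space M. x \<le> \<bar>\<Sum>j\<in>I. a j * Zs j \<omega>\<bar>}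
      \<subseteq> {\<omega>\<in>space M. x \<le> (\<Sum>j\<in>I. a j * Zs j \<omega>)} \<union> {\<omega>\<in>space M. x \<le> (\<Sum>j\<in>I. - a j * Zs j \<omega>)}"
    by (auto simp: sum_negf abs_if)
  then have "prob {\<omega>\<in>space M. x \<le> \<bar>\<Sum>j\<in>I. a j * Zs j \<omega>\<bar>}
      \<le> prob {\<omega>\<in>space M. x \<le> (\<Sum>j\<in>I. a j * Zs j \<omega>)} + prob {\<omega>\<in>space M. x \<le> (\<Sum>j\<in>I. - a j * Zs j \<omega>)}"
    by (rule measure_le_add_of_subset_Un; measurable)
  also have "\<dots> \<le> exp 1 * exp (- x / \<sigma>) + exp 1 * exp (- x / \<sigma>)"
    using var by (intro add_mono laplace_sum_upper_tail[OF indep lap fin \<sigma>]) auto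
  finally show ?thesis by simp
qed

lemma (in prob_space) tendsto_prob_abs_ge_L2:
  assumes [measurable]: "\<And>n. Y n \<in> borel_measurable M"
    and L2: "(\<lambda>n. \<integral>\<^sup>+\<omega>. ennreal ((Y n \<omega>)\<^sup>2) \<partial>M) \<longlonglongrightarrow> 0" and \<delta>: "0 < \<delta>"
  shows "(\<lambda>n. prob {\<omega>\<in>space M. \<delta> \<le> \<bar>Y n \<omega>\<bar>}) \<longlonglongrightarrow> 0"
proof -
  have Markov: "ennreal (prob {\<omega>\<in>space M. \<delta> \<le> \<bar>Y n \<omega>\<bar>})
      \<le> ennreal (1 / \<delta>\<^sup>2) * (\<integral>\<^sup>+\<omega>. ennreal ((Y n \<omega>)\<^sup>2) \<partial>M)" for n
  proof -
    have "{\<omega>\<in>space M. \<delta> \<le> \<bar>Y n \<omega>\<bar>} \<subseteq> {\<omega>\<in>space M. 1 \<le> ennreal (1 / \<delta>\<^sup>2) * ennreal ((Y n \<omega>)\<^sup>2)}"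
    proof safe
      fix \<omega> assume "\<delta> \<le> \<bar>Y n \<omega>\<bar>"
      then have "\<delta>\<^sup>2 \<le> (Y n \<omega>)\<^sup>2"
        using power_mono[of \<delta> "\<bar>Y n \<omega>\<bar>" 2] \<delta> by simp
      then have "ennreal 1 \<le> ennreal (1 / \<delta>\<^sup>2 * (Y n \<omega>)\<^sup>2)"
        using \<delta> by (intro ennreal_leI) (simp add: field_simps)
      also have "\<dots> = ennreal (1 / \<delta>\<^sup>2) * ennreal ((Y n \<omega>)\<^sup>2)"
        by (rule ennreal_mult') simp
      finally show "1 \<le> ennreal (1 / \<delta>\<^sup>2) * ennreal ((Y n \<omega>)\<^sup>2)"
        by (simp only: ennreal_1)
    qed
    then have "emeasure M {\<omega>\<in>space M. \<delta> \<le> \<bar>Y n \<omega>\<bar>}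
        \<le> ennreal (1 / \<delta>\<^sup>2) * (\<integral>\<^sup>+\<omega>. ennreal ((Y n \<omega>)\<^sup>2) * indicator (space M) \<omega> \<partial>M)"
      by (rule order.trans[OF emeasure_mono nn_integral_Markov_inequality]) measurable
    also have "(\<integral>\<^sup>+\<omega>. ennreal ((Y n \<omega>)\<^sup>2) * indicator (space M) \<omega> \<partial>M) = (\<integral>\<^sup>+\<omega>. ennreal ((Y n \<omega>)\<^sup>2) \<partial>M)"
      by (rule nn_integral_cong) simp
    finally show ?thesis by (simp add: emeasure_eq_measure)
  qed
  have "(\<lambda>n. ennreal (1 / \<delta>\<^sup>2) * (\<integral>\<^sup>+\<omega>. ennreal ((Y n \<omega>)\<^sup>2) \<partial>M)) \<longlonglongrightarrow> ennreal (1 / \<delta>\<^sup>2) * 0"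
    by (rule tendsto_mult_ennreal[OF tendsto_const L2]) simp
  then have bound: "(\<lambda>n. ennreal (1 / \<delta>\<^sup>2) * (\<integral>\<^sup>+\<omega>. ennreal ((Y n \<omega>)\<^sup>2) \<partial>M)) \<longlonglongrightarrow> 0"
    by (simp only: mult_zero_right)
  have "(\<lambda>n. ennreal (prob {\<omega>\<in>space M. \<delta> \<le> \<bar>Y n \<omega>\<bar>})) \<longlonglongrightarrow> ennreal 0"
    unfolding ennreal_0 by (rule tendsto_sandwich[OF _ _ tendsto_const bound]) (simp_all add: Markov)
  then show ?thesis
    by (rule tendsto_ennrealD) simp_all
qed

lemma (in prob_space) prob_abs_ge_le_of_L2_limit:
  assumes [measurable]: "X \<in> borel_measurable M" "\<And>n. S n \<in> borel_measurable M"
    and L2: "(\<lambda>n. \<integral>\<^sup>+\<omega>. ennreal ((X \<omega> - S n \<omega>)\<^sup>2) \<partial>M) \<longlonglongrightarrow> 0"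
    and tail: "\<And>n y. prob {\<omega>\<in>space M. y \<le> \<bar>S n \<omega>\<bar>} \<le> B y"
    and B: "isCont B x"
  shows "prob {\<omega>\<in>space M. x \<le> \<bar>X \<omega>\<bar>} \<le> B x"
proof -
  have shifted: "prob {\<omega>\<in>space M. x \<le> \<bar>X \<omega>\<bar>} \<le> B (x - \<delta>)" if \<delta>: "0 < \<delta>" for \<delta>
  proof (rule tendsto_le[OF trivial_limit_sequentially _ tendsto_const])
    have "(\<lambda>n. B (x - \<delta>) + prob {\<omega>\<in>space M. \<delta> \<le> \<bar>X \<omega> - S n \<omega>\<bar>}) \<longlonglongrightarrow> B (x - \<delta>) + 0"
      by (intro tendsto_add tendsto_const tendsto_prob_abs_ge_L2 L2 \<delta>) measurable
    then show "(\<lambda>n. B (x - \<delta>) + prob {\<omega>\<in>space M. \<delta> \<le> \<bar>X \<omega> - S n \<omega>\<bar>}) \<longlonglongrightarrow> B (x - \<delta>)"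
      by simp
    show "\<forall>\<^sub>F n in sequentially. prob {\<omega>\<in>space M. x \<le> \<bar>X \<omega>\<bar>}
        \<le> B (x - \<delta>) + prob {\<omega>\<in>space M. \<delta> \<le> \<bar>X \<omega> - S n \<omega>\<bar>}"
    proof (intro always_eventually allI)
      fix n
      have "{\<omega>\<in>space M. x \<le> \<bar>X \<omega>\<bar>}
          \<subseteq> {\<omega>\<in>space M. x - \<delta> \<le> \<bar>S n \<omega>\<bar>} \<union> {\<omega>\<in>space M. \<delta> \<le> \<bar>X \<omega> - S n \<omega>\<bar>}"
        by auto
      then have "prob {\<omega>\<in>space M. x \<le> \<bar>X \<omega>\<bar>}
          \<le> prob {\<omega>\<in>space M. x - \<delta> \<le> \<bar>S n \<omega>\<bar>} + prob {\<omega>\<in>space M. \<delta> \<le> \<bar>X \<omega> - S n \<omega>\<bar>}"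
        by (rule measure_le_add_of_subset_Un; measurable)
      then show "prob {\<omega>\<in>space M. x \<le> \<bar>X \<omega>\<bar>}
          \<le> B (x - \<delta>) + prob {\<omega>\<in>space M. \<delta> \<le> \<bar>X \<omega> - S n \<omega>\<bar>}"
        using tail[of "x - \<delta>" n] by linarith
    qed
  qed
  have "((\<lambda>\<delta>. B (x - \<delta>)) \<longlongrightarrow> B x) (at_right 0)"
    using B by (intro isCont_tendsto_compose[of x B]) (auto intro!: tendsto_eq_intros)
  then show ?thesis
    by (rule tendsto_le[OF trivial_limit_at_right_real _ tendsto_const])
       (rule eventually_mono[OF eventually_at_right_less shifted])
qed

lemma (in prob_space) laplace_series_tail:
  assumes indep: "indep_vars (\<lambda>_. borel) Zs UNIV"
    and lap: "\<forall>j. distributed M lborel (Zs j) (\<lambda>x. ennreal (laplace_density x))"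
    and [measurable]: "X \<in> borel_measurable M"
    and L2: "(\<lambda>n. \<integral>\<^sup>+\<omega>. ennreal ((X \<omega> - (\<Sum>j<n. a j * Zs j \<omega>))\<^sup>2) \<partial>M) \<longlonglongrightarrow> 0"
    and var: "\<And>n. (\<Sum>j<n. (a j)\<^sup>2) \<le> \<sigma>\<^sup>2" and \<sigma>: "0 < \<sigma>"
  shows "prob {\<omega>\<in>space M. x \<le> \<bar>X \<omega>\<bar>} \<le> 2 * exp 1 * exp (- x / \<sigma>)"
proof (rule prob_abs_ge_le_of_L2_limit[OF _ _ L2])
  have [measurable]: "Zs j \<in> borel_measurable M" for j
    using indep unfolding indep_vars_def by auto
  show "(\<lambda>\<omega>. \<Sum>j<n. a j * Zs j \<omega>) \<in> borel_measurable M" for n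
    by measurable
  show "prob {\<omega>\<in>space M. y \<le> \<bar>\<Sum>j<n. a j * Zs j \<omega>\<bar>} \<le> 2 * exp 1 * exp (- y / \<sigma>)" for n y
    using var by (rule laplace_sum_abs_tail[OF indep lap finite_lessThan \<sigma>])
  show "isCont (\<lambda>y. 2 * exp 1 * exp (- y / \<sigma>)) x"
    using \<sigma> by (intro continuous_intros) auto
qed measurable

lemma tendsto_nn_integral_sq_diff:
  fixes X Y :: "'a \<Rightarrow> real"
  assumes [measurable]: "X \<in> borel_measurable M" "Y \<in> borel_measurable M"
    "\<And>n. S n \<in> borel_measurable M" "\<And>n. R n \<in> borel_measurable M"
    and X: "(\<lambda>n. \<integral>\<^sup>+\<omega>. ennreal ((X \<omega> - S n \<omega>)\<^sup>2) \<partial>M) \<longlonglongrightarrow> 0"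
    and Y: "(\<lambda>n. \<integral>\<^sup>+\<omega>. ennreal ((Y \<omega> - R n \<omega>)\<^sup>2) \<partial>M) \<longlonglongrightarrow> 0"
  shows "(\<lambda>n. \<integral>\<^sup>+\<omega>. ennreal ((X \<omega> - Y \<omega> - (S n \<omega> - R n \<omega>))\<^sup>2) \<partial>M) \<longlonglongrightarrow> 0"
proof (rule tendsto_sandwich[OF always_eventually always_eventually tendsto_const])
  define b where "b n = 2 * (\<integral>\<^sup>+\<omega>. ennreal ((X \<omega> - S n \<omega>)\<^sup>2) \<partial>M) + 2 * (\<integral>\<^sup>+\<omega>. ennreal ((Y \<omega> - R n \<omega>)\<^sup>2) \<partial>M)" for n
  show "\<forall>n. (\<integral>\<^sup>+\<omega>. ennreal ((X \<omega> - Y \<omega> - (S n \<omega> - R n \<omega>))\<^sup>2) \<partial>M) \<le> b n"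
  proof
    fix n
    have "(\<integral>\<^sup>+\<omega>. ennreal ((X \<omega> - Y \<omega> - (S n \<omega> - R n \<omega>))\<^sup>2) \<partial>M)
        \<le> (\<integral>\<^sup>+\<omega>. 2 * ennreal ((X \<omega> - S n \<omega>)\<^sup>2) + 2 * ennreal ((Y \<omega> - R n \<omega>)\<^sup>2) \<partial>M)"
    proof (rule nn_integral_mono)
      fix \<omega>
      define p q where "p = X \<omega> - S n \<omega>" and "q = Y \<omega> - R n \<omega>"
      have "(p - q)\<^sup>2 \<le> 2 * p\<^sup>2 + 2 * q\<^sup>2"
        using zero_le_power2[of "p + q"] by (simp add: power2_eq_square algebra_simps)
      then have "ennreal ((p - q)\<^sup>2) \<le> ennreal (2 * p\<^sup>2 + 2 * q\<^sup>2)"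
        by (rule ennreal_leI)
      also have "\<dots> = 2 * ennreal (p\<^sup>2) + 2 * ennreal (q\<^sup>2)"
        by (simp add: ennreal_plus ennreal_mult)
      finally show "ennreal ((X \<omega> - Y \<omega> - (S n \<omega> - R n \<omega>))\<^sup>2)
          \<le> 2 * ennreal ((X \<omega> - S n \<omega>)\<^sup>2) + 2 * ennreal ((Y \<omega> - R n \<omega>)\<^sup>2)"
        by (simp add: p_def q_def algebra_simps)
    qed
    also have "\<dots> = b n"
      unfolding b_def by (simp add: nn_integral_add nn_integral_cmult)
    finally show "(\<integral>\<^sup>+\<omega>. ennreal ((X \<omega> - Y \<omega> - (S n \<omega> - R n \<omega>))\<^sup>2) \<partial>M) \<le> b n" .
  qed
  have "b \<longlonglongrightarrow> 2 * 0 + 2 * 0"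
    unfolding b_def by (intro tendsto_add tendsto_mult_ennreal tendsto_const X Y) simp_all
  then show "b \<longlonglongrightarrow> 0" by simp
qed simp

lemma (in prob_space) laplace_series_increment_tail:
  assumes indep: "indep_vars (\<lambda>_. borel) Zs UNIV"
    and lap: "\<forall>j. distributed M lborel (Zs j) (\<lambda>x. ennreal (laplace_density x))"
    and [measurable]: "Z u \<in> borel_measurable M" "Z v \<in> borel_measurable M"
    and L2: "\<And>t. t \<in> {u, v} \<Longrightarrow>
      (\<lambda>n. \<integral>\<^sup>+\<omega>. ennreal ((Z t \<omega> - (\<Sum>j<n. sqrt (lam j) * Zs j \<omega> * \<phi> j t))\<^sup>2) \<partial>M) \<longlonglongrightarrow> 0"
    and lam: "\<forall>j. 0 \<le> lam j"
    and D: "(\<lambda>j. lam j * (\<phi> j u - \<phi> j v)\<^sup>2) sums D" and "D \<le> \<sigma>\<^sup>2" and \<sigma>: "0 < \<sigma>"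
  shows "prob {\<omega>\<in>space M. x \<le> \<bar>Z u \<omega> - Z v \<omega>\<bar>} \<le> 2 * exp 1 * exp (- x / \<sigma>)"
proof (rule laplace_series_tail[OF indep lap _ _ _ \<sigma>])
  define a where "a j = sqrt (lam j) * (\<phi> j u - \<phi> j v)" for j
  have [measurable]: "Zs j \<in> borel_measurable M" for j
    using indep unfolding indep_vars_def by auto
  show "(\<lambda>\<omega>. Z u \<omega> - Z v \<omega>) \<in> borel_measurable M"
    by measurable
  have "(\<lambda>n. \<integral>\<^sup>+\<omega>. ennreal ((Z u \<omega> - Z v \<omega> - ((\<Sum>j<n. sqrt (lam j) * Zs j \<omega> * \<phi> j u)
      - (\<Sum>j<n. sqrt (lam j) * Zs j \<omega> * \<phi> j v)))\<^sup>2) \<partial>M) \<longlonglongrightarrow> 0"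
    using L2 by (intro tendsto_nn_integral_sq_diff) auto
  moreover have "(\<Sum>j<n. sqrt (lam j) * Zs j \<omega> * \<phi> j u) - (\<Sum>j<n. sqrt (lam j) * Zs j \<omega> * \<phi> j v)
      = (\<Sum>j<n. a j * Zs j \<omega>)" for n \<omega>
    unfolding a_def by (simp add: sum_subtractf[symmetric] algebra_simps)
  ultimately show "(\<lambda>n. \<integral>\<^sup>+\<omega>. ennreal ((Z u \<omega> - Z v \<omega> - (\<Sum>j<n. a j * Zs j \<omega>))\<^sup>2) \<partial>M) \<longlonglongrightarrow> 0"
    by simp
  have a_sq: "(a j)\<^sup>2 = lam j * (\<phi> j u - \<phi> j v)\<^sup>2" for j
    using lam unfolding a_def by (simp add: power_mult_distrib)
  show "(\<Sum>j<n. (a j)\<^sup>2) \<le> \<sigma>\<^sup>2" for n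
  proof -
    have "(\<Sum>j<n. (a j)\<^sup>2) \<le> (\<Sum>j. lam j * (\<phi> j u - \<phi> j v)\<^sup>2)"
      using D lam unfolding a_sq by (intro sum_le_suminf) (auto simp: sums_iff)
    also have "\<dots> = D"
      using D by (simp add: sums_iff)
    finally show ?thesis using \<open>D \<le> \<sigma>\<^sup>2\<close> by linarith
  qed
qed

lemma mercer_increment_sums:
  fixes lam :: "nat \<Rightarrow> real" and \<phi> :: "nat \<Rightarrow> 'a \<Rightarrow> real"
  assumes mercer: "\<forall>s\<in>T. \<forall>t\<in>T. (\<lambda>j. lam j * \<phi> j s * \<phi> j t) sums C s t" and "u \<in> T" "v \<in> T"
  shows "(\<lambda>j. lam j * (\<phi> j u - \<phi> j v)\<^sup>2) sums (C u u - 2 * C u v + C v v)"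
proof -
  have "(\<lambda>j. lam j * \<phi> j u * \<phi> j u - 2 * (lam j * \<phi> j u * \<phi> j v) + lam j * \<phi> j v * \<phi> j v)
      sums (C u u - 2 * C u v + C v v)"
    using mercer assms(2,3) by (intro sums_add sums_diff sums_mult) auto
  then show ?thesis
    by (simp add: power2_eq_square algebra_simps)
qed

lemma hoelder_kernel_increment_le:
  fixes C :: "'a::real_normed_vector \<Rightarrow> 'a \<Rightarrow> real"
  assumes sym: "\<forall>s\<in>T. \<forall>t\<in>T. C s t = C t s"
    and hoelder: "\<forall>t1\<in>T. \<forall>t2\<in>T. \<forall>s\<in>T. \<bar>C t1 s - C t2 s\<bar> \<le> M_C * norm (t1 - t2) powr \<alpha>"
    and "u \<in> T" "v \<in> T"
  shows "C u u - 2 * C u v + C v v \<le> 2 * M_C * dist u v powr \<alpha>"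
proof -
  have "\<bar>C u u - C v u\<bar> \<le> M_C * dist u v powr \<alpha>" "\<bar>C v v - C u v\<bar> \<le> M_C * dist u v powr \<alpha>"
    using hoelder assms(3,4) by (auto simp: dist_norm norm_minus_commute)
  moreover have "C v u = C u v"
    using sym assms(3,4) by auto
  ultimately show ?thesis by linarith
qed

section \<open>Dyadic nets\<close>

definition dyadic_round :: "nat \<Rightarrow> 'a::euclidean_space \<Rightarrow> 'a" where
  "dyadic_round k x = (\<Sum>b\<in>Basis. (of_int (round ((x \<bullet> b) * 2 ^ k)) / 2 ^ k) *\<^sub>R b)"

lemma dist_dyadic_round_le: "dist x (dyadic_round k x) \<le> DIM('a) / 2 ^ k"
  for x :: "'a::euclidean_space"
proof -
  have "x - dyadic_round k x = (\<Sum>b\<in>Basis. ((x \<bullet> b) - of_int (round ((x \<bullet> b) * 2 ^ k)) / 2 ^ k) *\<^sub>R (b::'a))"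
    unfolding dyadic_round_def by (subst (1) euclidean_representation[symmetric, of x])
      (simp add: sum_subtractf[symmetric] scaleR_diff_left)
  also have "norm \<dots> \<le> (\<Sum>b\<in>(Basis::'a set). norm (((x \<bullet> b) - of_int (round ((x \<bullet> b) * 2 ^ k)) / 2 ^ k) *\<^sub>R b))"
    by (rule norm_sum)
  also have "\<dots> \<le> (\<Sum>b\<in>(Basis::'a set). 1 / 2 ^ k)"
  proof (rule sum_mono)
    fix b :: 'a assume b: "b \<in> Basis"
    have "\<bar>(x \<bullet> b) - of_int (round ((x \<bullet> b) * 2 ^ k)) / 2 ^ k\<bar>
        = \<bar>of_int (round ((x \<bullet> b) * 2 ^ k)) - (x \<bullet> b) * 2 ^ k\<bar> / 2 ^ k"
      by (simp add: field_simps abs_minus_commute)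
    also have "\<dots> \<le> 1 / 2 ^ k"
      using of_int_round_abs_le[of "(x \<bullet> b) * 2 ^ k"] by (simp add: divide_right_mono)
    finally show "norm (((x \<bullet> b) - of_int (round ((x \<bullet> b) * 2 ^ k)) / 2 ^ k) *\<^sub>R b) \<le> 1 / 2 ^ k"
      using b by simp
  qed
  finally show ?thesis
    by (simp add: dist_norm)
qed

lemma card_dyadic_round_image_le:
  fixes S :: "'a::euclidean_space set"
  assumes S: "\<And>x. x \<in> S \<Longrightarrow> norm x \<le> R" and R: "0 \<le> R"
  shows "finite (dyadic_round k ` S)" "real (card (dyadic_round k ` S)) \<le> ((2 * R + 3) * 2 ^ k) ^ DIM('a)"
proof -
  define N where "N = \<lceil>R * 2 ^ k\<rceil>"
  define P where "P = (Basis::'a set) \<rightarrow>\<^sub>E {-N..N}"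
  define G :: "('a \<Rightarrow> int) \<Rightarrow> 'a" where "G f = (\<Sum>b\<in>Basis. (of_int (f b) / 2 ^ k) *\<^sub>R b)" for f
  have round_bound: "round ((x \<bullet> b) * 2 ^ k) \<in> {-N..N}" if "x \<in> S" "b \<in> Basis" for x b
  proof -
    have "\<bar>x \<bullet> b\<bar> \<le> R" using Basis_le_norm[OF that(2), of x] S[OF that(1)] by linarith
    then have "\<bar>(x \<bullet> b) * 2 ^ k\<bar> \<le> R * 2 ^ k" by (simp add: abs_mult)
    moreover have "\<bar>of_int (round ((x \<bullet> b) * 2 ^ k)) - (x \<bullet> b) * 2 ^ k\<bar> \<le> 1 / 2"
      by (rule of_int_round_abs_le)
    ultimately have "\<bar>real_of_int (round ((x \<bullet> b) * 2 ^ k))\<bar> < real_of_int N + 1"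
      using le_of_int_ceiling[of "R * 2 ^ k"] unfolding N_def by linarith
    then have "\<bar>round ((x \<bullet> b) * 2 ^ k)\<bar> < N + 1"
      by (metis of_int_1 of_int_abs of_int_add of_int_less_iff)
    then show ?thesis by auto
  qed
  have sub: "dyadic_round k ` S \<subseteq> G ` P"
  proof
    fix y assume "y \<in> dyadic_round k ` S"
    then obtain x where x: "x \<in> S" and y: "y = dyadic_round k x" by blast
    define f where "f = restrict (\<lambda>b. round ((x \<bullet> b) * 2 ^ k)) Basis"
    have "f \<in> P" unfolding P_def f_def using round_bound[OF x] by auto
    moreover have "y = G f" unfolding y G_def dyadic_round_def f_def by (intro sum.cong) auto
    ultimately show "y \<in> G ` P" by blast
  qed
  have finP: "finite P" unfolding P_def by (intro finite_PiE) auto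
  show "finite (dyadic_round k ` S)" by (rule finite_subset[OF sub finite_imageI[OF finP]])
  have "card (dyadic_round k ` S) \<le> card P"
    using card_mono[OF finite_imageI[OF finP] sub] card_image_le[OF finP, of G] by linarith
  also have "card P = nat (2 * N + 1) ^ DIM('a)" unfolding P_def by (simp add: card_PiE)
  finally have "real (card (dyadic_round k ` S)) \<le> real (nat (2 * N + 1)) ^ DIM('a)"
    by (metis of_nat_le_iff of_nat_power)
  also have "\<dots> \<le> ((2 * R + 3) * 2 ^ k) ^ DIM('a)"
  proof (rule power_mono)
    have "0 \<le> R * 2 ^ k" using R by simp
    then have N: "0 \<le> N" unfolding N_def by linarith
    have "real (nat (2 * N + 1)) = 2 * of_int N + 1" using N by simp
    also have "\<dots> \<le> 2 * (R * 2 ^ k) + 3"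
      using of_int_ceiling_le_add_one[of "R * 2 ^ k"] unfolding N_def by linarith
    also have "\<dots> \<le> (2 * R + 3) * 2 ^ k"
      using one_le_power[of "2::real" k] by (simp add: algebra_simps)
    finally show "real (nat (2 * N + 1)) \<le> (2 * R + 3) * 2 ^ k" .
  qed simp
  finally show "real (card (dyadic_round k ` S)) \<le> ((2 * R + 3) * 2 ^ k) ^ DIM('a)" .
qed

definition dyadic_net :: "'a set \<Rightarrow> nat \<Rightarrow> 'a \<Rightarrow> 'a::euclidean_space" where
  "dyadic_net T k t = (SOME s. s \<in> T \<and> dyadic_round k s = dyadic_round k t)"

lemma dyadic_net:
  assumes "t \<in> T"
  shows "dyadic_net T k t \<in> T" "dyadic_round k (dyadic_net T k t) = dyadic_round k t"
proof -
  have "\<exists>s. s \<in> T \<and> dyadic_round k s = dyadic_round k t" using assms by blast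
  then have "dyadic_net T k t \<in> T \<and> dyadic_round k (dyadic_net T k t) = dyadic_round k t"
    unfolding dyadic_net_def by (rule someI_ex)
  then show "dyadic_net T k t \<in> T" "dyadic_round k (dyadic_net T k t) = dyadic_round k t"
    by auto
qed

lemma dist_dyadic_net_le:
  fixes T :: "'a::euclidean_space set"
  assumes "t \<in> T"
  shows "dist t (dyadic_net T k t) \<le> 2 * DIM('a) / 2 ^ k"
proof -
  have "dist t (dyadic_net T k t) \<le> dist t (dyadic_round k t) + dist (dyadic_round k (dyadic_net T k t)) (dyadic_net T k t)"
    using dist_triangle[of t "dyadic_net T k t" "dyadic_round k t"] dyadic_net(2)[OF assms] by simp
  also have "\<dots> \<le> DIM('a) / 2 ^ k + DIM('a) / 2 ^ k"
    using dist_dyadic_round_le[of t k] dist_dyadic_round_le[of "dyadic_net T k t" k]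
    by (simp add: dist_commute)
  finally show ?thesis by simp
qed

lemma dyadic_net_image_card_le:
  fixes T :: "'a::euclidean_space set"
  assumes "bounded T"
  obtains K where "\<And>k. finite (dyadic_net T k ` T)" "\<And>k. real (card (dyadic_net T k ` T)) \<le> K * (2 ^ DIM('a)) ^ k"
proof -
  obtain R where R: "0 < R" "\<And>x. x \<in> T \<Longrightarrow> norm x \<le> R"
    using assms unfolding bounded_pos by blast
  note round_image = card_dyadic_round_image_le[OF R(2) less_imp_le[OF R(1)]]
  define pick where "pick k y = (SOME s. s \<in> T \<and> dyadic_round k s = y)" for k y
  have image: "dyadic_net T k ` T = pick k ` dyadic_round k ` T" for k
    unfolding dyadic_net_def pick_def image_image ..
  show ?thesis
  proof
    show "finite (dyadic_net T k ` T)" for k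
      unfolding image using round_image(1) by blast
    fix k
    have "real (card (dyadic_net T k ` T)) \<le> real (card (dyadic_round k ` T))"
      unfolding image using card_image_le[OF round_image(1)] by simp
    also have "\<dots> \<le> ((2 * R + 3) * 2 ^ k) ^ DIM('a)"
      by (rule round_image(2))
    also have "\<dots> = (2 * R + 3) ^ DIM('a) * (2 ^ DIM('a)) ^ k"
      by (simp add: power_mult_distrib flip: power_mult)
    finally show "real (card (dyadic_net T k ` T)) \<le> (2 * R + 3) ^ DIM('a) * (2 ^ DIM('a)) ^ k" .
  qed
qed

section \<open>Chaining\<close>

lemma summable_steps_tendsto:
  fixes Y :: "nat \<Rightarrow> real"
  assumes \<epsilon>: "summable \<epsilon>" and step: "\<And>j. K \<le> j \<Longrightarrow> \<bar>Y j - Y (Suc j)\<bar> \<le> \<epsilon> j"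
  shows "convergent Y" and "\<And>j. K \<le> j \<Longrightarrow> \<bar>Y j - lim Y\<bar> \<le> (\<Sum>i. \<epsilon> (i + j))"
proof -
  have tail: "Y \<longlonglongrightarrow> Y j + (\<Sum>i. Y (Suc (i + j)) - Y (i + j))
      \<and> \<bar>\<Sum>i. Y (Suc (i + j)) - Y (i + j)\<bar> \<le> (\<Sum>i. \<epsilon> (i + j))" if j: "K \<le> j" for j
  proof -
    define d where "d i = Y (Suc (i + j)) - Y (i + j)" for i
    have d_le: "\<bar>d i\<bar> \<le> \<epsilon> (i + j)" for i
      using step[of "i + j"] j by (simp add: d_def abs_minus_commute)
    have \<epsilon>j: "summable (\<lambda>i. \<epsilon> (i + j))"
      using \<epsilon> by (rule summable_ignore_initial_segment)
    have d: "summable (\<lambda>i. \<bar>d i\<bar>)"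
      by (rule summable_comparison_test'[OF \<epsilon>j]) (simp add: d_le)
    have telescope: "(\<Sum>i<n. d i) = Y (n + j) - Y j" for n
      unfolding d_def using sum_lessThan_telescope[of "\<lambda>i. Y (i + j)" n] by simp
    have "(\<lambda>n. Y j + (\<Sum>i<n. d i)) \<longlonglongrightarrow> Y j + (\<Sum>i. d i)"
      by (intro tendsto_add tendsto_const summable_LIMSEQ summable_rabs_cancel[OF d])
    then have lim: "(\<lambda>n. Y (n + j)) \<longlonglongrightarrow> Y j + (\<Sum>i. d i)"
      by (simp add: telescope)
    have "\<bar>\<Sum>i. d i\<bar> \<le> (\<Sum>i. \<bar>d i\<bar>)"
      by (rule summable_rabs[OF d])
    also have "\<dots> \<le> (\<Sum>i. \<epsilon> (i + j))"
      by (rule suminf_le[OF d_le d \<epsilon>j])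
    finally show ?thesis
      using LIMSEQ_offset[OF lim] unfolding d_def by (intro conjI)
  qed
  then show "convergent Y"
    unfolding convergent_def using order.refl by blast
  show "\<bar>Y j - lim Y\<bar> \<le> (\<Sum>i. \<epsilon> (i + j))" if "K \<le> j" for j
  proof -
    have "lim Y = Y j + (\<Sum>i. Y (Suc (i + j)) - Y (i + j))"
      using tail[OF that] by (intro limI) simp
    then show ?thesis
      using tail[OF that] by simp
  qed
qed

lemma continuous_on_lim_chaining:
  fixes Y :: "nat \<Rightarrow> 'a::metric_space \<Rightarrow> real"
  assumes \<epsilon>: "summable \<epsilon>" "\<And>j. 0 \<le> \<epsilon> j" and \<delta>: "\<And>j. 0 < \<delta> j"
    and step: "\<And>j t. K \<le> j \<Longrightarrow> t \<in> T \<Longrightarrow> \<bar>Y j t - Y (Suc j) t\<bar> \<le> \<epsilon> j"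
    and near: "\<And>j t t'. K \<le> j \<Longrightarrow> t \<in> T \<Longrightarrow> t' \<in> T \<Longrightarrow> dist t t' \<le> \<delta> j \<Longrightarrow> \<bar>Y j t - Y j t'\<bar> \<le> \<epsilon> j"
  shows "continuous_on T (\<lambda>t. lim (\<lambda>j. Y j t))"
  unfolding continuous_on_iff
proof (intro ballI allI impI)
  fix t e assume t: "t \<in> T" and e: "(0::real) < e"
  define \<tau> where "\<tau> j = (\<Sum>i. \<epsilon> (i + j))" for j
  have tail: "\<bar>Y j t - lim (\<lambda>j. Y j t)\<bar> \<le> \<tau> j" if "K \<le> j" "t \<in> T" for j t
    unfolding \<tau>_def using that by (intro summable_steps_tendsto(2)[OF \<epsilon>(1)] step)
  have \<epsilon>_le_\<tau>: "\<epsilon> j \<le> \<tau> j" for j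
    unfolding \<tau>_def using \<epsilon> sum_le_suminf[OF summable_ignore_initial_segment[OF \<epsilon>(1)], of "{0}" j] by simp
  have "\<tau> \<longlonglongrightarrow> 0"
    unfolding \<tau>_def by (rule suminf_exist_split2[OF \<epsilon>(1)])
  then have "\<forall>\<^sub>F j in sequentially. K \<le> j \<and> \<tau> j < e / 3"
    using e by (intro eventually_conj eventually_ge_at_top order_tendstoD(2)) auto
  then obtain j where j: "K \<le> j" "\<tau> j < e / 3"
    using eventually_happens'[OF trivial_limit_sequentially] by blast
  show "\<exists>d>0. \<forall>t'\<in>T. dist t' t < d \<longrightarrow> dist (lim (\<lambda>j. Y j t')) (lim (\<lambda>j. Y j t)) < e"
  proof (intro exI conjI ballI impI)
    fix t' assume t': "t' \<in> T" and "dist t' t < \<delta> j"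
    then have "\<bar>Y j t' - Y j t\<bar> \<le> \<epsilon> j" using near[OF j(1) t' t] by simp
    then show "dist (lim (\<lambda>j. Y j t')) (lim (\<lambda>j. Y j t)) < e"
      using tail[OF j(1) t] tail[OF j(1) t'] \<epsilon>_le_\<tau>[of j] j(2) by (simp add: dist_real_def)
  qed (rule \<delta>)
qed

locale subexponential_increments = prob_space M for M :: "'b measure" +
  fixes T :: "'a::euclidean_space set" and Z :: "'a \<Rightarrow> 'b \<Rightarrow> real" and A V \<alpha> :: real
  assumes bounded_T: "bounded T"
    and Z_measurable: "\<And>t. t \<in> T \<Longrightarrow> Z t \<in> borel_measurable M"
    and V_pos: "0 < V" and alpha_pos: "0 < \<alpha>"
    and increment_tail: "\<And>u v \<sigma> x. u \<in> T \<Longrightarrow> v \<in> T \<Longrightarrow> 0 < \<sigma> \<Longrightarrow> V * dist u v powr \<alpha> \<le> \<sigma>\<^sup>2 \<Longrightarrow>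
       prob {\<omega>\<in>space M. x \<le> \<bar>Z u \<omega> - Z v \<omega>\<bar>} \<le> A * exp (- x / \<sigma>)"
begin

text \<open>Two consecutive net points of one t, and the level-j net points of two points at distance
  at most 2^-j, are never further apart than link_radius j.\<close>

definition link_radius :: "nat \<Rightarrow> real" where
  "link_radius j = (4 * DIM('a) + 1) / 2 ^ j"

definition chain_scale :: "nat \<Rightarrow> real" where
  "chain_scale j = sqrt (V * link_radius j powr \<alpha>)"

text \<open>The threshold makes exp (- chain_level j / chain_scale j) = (2 * 4^d)^-(j+1), which beats
  the O(4^(d j)) links of level j; it stays summable because chain_scale decays geometrically.\<close>

definition chain_level :: "nat \<Rightarrow> real" where
  "chain_level j = ln (2 * 4 ^ DIM('a)) * Suc j * chain_scale j"

definition links :: "nat \<Rightarrow> ('a \<times> 'a) set" where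
  "links j = {(u, v). u \<in> dyadic_net T j ` T \<union> dyadic_net T (Suc j) ` T \<and>
     v \<in> dyadic_net T j ` T \<union> dyadic_net T (Suc j) ` T \<and> dist u v \<le> link_radius j}"

lemma link_base_gt_1: "(1::real) < 2 * 4 ^ DIM('a)"
proof -
  have "(1::real) \<le> 4 ^ DIM('a)" by simp
  then show ?thesis by linarith
qed

lemma ln_link_base_pos: "0 < ln (2 * 4 ^ DIM('a) :: real)"
  using link_base_gt_1 by (rule ln_gt_zero)

lemma chain_scale_pos: "0 < chain_scale j"
  unfolding chain_scale_def link_radius_def using V_pos by simp

lemma chain_scale_geometric:
  "chain_scale j = sqrt (V * (4 * DIM('a) + 1) powr \<alpha>) * sqrt ((1 / 2) powr \<alpha>) ^ j"
proof -
  have "link_radius j powr \<alpha> = (4 * DIM('a) + 1) powr \<alpha> * ((1 / 2) powr \<alpha>) ^ j"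
    unfolding link_radius_def by (simp add: powr_divide powr_power powr_realpow[symmetric] powr_powr mult.commute)
  then show ?thesis
    unfolding chain_scale_def by (simp add: real_sqrt_mult real_sqrt_power)
qed

lemma summable_chain_level: "summable chain_level"
proof -
  have "norm (sqrt ((1 / 2) powr \<alpha>)) < 1"
    using powr_less_mono2[of \<alpha> "1 / 2" 1] alpha_pos by simp
  then have "summable (\<lambda>j. of_nat (Suc j) * sqrt ((1 / 2) powr \<alpha>) ^ j)"
    by (rule sums_summable[OF geometric_deriv_sums])
  then have "summable (\<lambda>j. (ln (2 * 4 ^ DIM('a)) * sqrt (V * (4 * DIM('a) + 1) powr \<alpha>))
      * (of_nat (Suc j) * sqrt ((1 / 2) powr \<alpha>) ^ j))"
    by (rule summable_mult)
  then show ?thesis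
    unfolding chain_level_def chain_scale_geometric by (simp add: ac_simps)
qed

lemma chain_level_nonneg: "0 \<le> chain_level j"
  unfolding chain_level_def using chain_scale_pos[of j] ln_link_base_pos by simp

lemma prob_increment_ge_chain_level:
  assumes "u \<in> T" "v \<in> T" "dist u v \<le> link_radius j"
  shows "prob {\<omega>\<in>space M. chain_level j \<le> \<bar>Z u \<omega> - Z v \<omega>\<bar>} \<le> A * (1 / (2 * 4 ^ DIM('a))) ^ Suc j"
proof -
  have "V * dist u v powr \<alpha> \<le> V * link_radius j powr \<alpha>"
    using assms(3) V_pos alpha_pos by (intro mult_left_mono powr_mono2) auto
  also have "\<dots> = (chain_scale j)\<^sup>2"
    unfolding chain_scale_def using V_pos by simp
  finally have "prob {\<omega>\<in>space M. chain_level j \<le> \<bar>Z u \<omega> - Z v \<omega>\<bar>} \<le> A * exp (- chain_level j / chain_scale j)"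
    using assms chain_scale_pos by (intro increment_tail)
  also have "exp (- chain_level j / chain_scale j) = (1 / (2 * 4 ^ DIM('a))) ^ Suc j"
  proof -
    have "- chain_level j / chain_scale j = real (Suc j) * - ln (2 * 4 ^ DIM('a))"
      unfolding chain_level_def using chain_scale_pos[of j] by simp
    then have "exp (- chain_level j / chain_scale j) = exp (- ln (2 * 4 ^ DIM('a))) ^ Suc j"
      by (simp only: exp_of_nat_mult)
    also have "exp (- ln (2 * 4 ^ DIM('a))) = 1 / (2 * 4 ^ DIM('a) :: real)"
      by (simp add: exp_minus inverse_eq_divide)
    finally show ?thesis .
  qed
  finally show ?thesis .
qed

lemma AE_eventually_increments_lt:
  assumes fin: "\<And>j. finite (P j)"
    and P: "\<And>j u v. (u, v) \<in> P j \<Longrightarrow> u \<in> T \<and> v \<in> T \<and> dist u v \<le> link_radius j"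
    and card: "summable (\<lambda>j. real (card (P j)) * (1 / (2 * 4 ^ DIM('a))) ^ Suc j)"
  shows "AE \<omega> in M. \<forall>\<^sub>F j in sequentially. \<forall>(u, v)\<in>P j. \<bar>Z u \<omega> - Z v \<omega>\<bar> < chain_level j"
proof -
  define F where "F j p = {\<omega>\<in>space M. chain_level j \<le> \<bar>Z (fst p) \<omega> - Z (snd p) \<omega>\<bar>}" for j p
  define E where "E j = (\<Union>p\<in>P j. F j p)" for j
  have F_sets: "F j p \<in> sets M" if "p \<in> P j" for j p
  proof -
    have [measurable]: "Z (fst p) \<in> borel_measurable M" "Z (snd p) \<in> borel_measurable M"
      using Z_measurable P[of "fst p" "snd p" j] that by auto
    show ?thesis unfolding F_def by measurable
  qed
  have "E j \<in> sets M" for j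
    unfolding E_def using fin F_sets by (intro sets.finite_UN) auto
  moreover have "summable (\<lambda>j. measure M (E j))"
  proof (rule summable_comparison_test'[OF summable_mult[OF card, of A]])
    fix j
    have "measure M (E j) \<le> (\<Sum>p\<in>P j. prob (F j p))"
      unfolding E_def using fin F_sets by (intro finite_measure_subadditive_finite) auto
    also have "\<dots> \<le> (\<Sum>p\<in>P j. A * (1 / (2 * 4 ^ DIM('a))) ^ Suc j)"
      unfolding F_def using P by (intro sum_mono prob_increment_ge_chain_level) auto
    finally show "norm (measure M (E j)) \<le> A * (real (card (P j)) * (1 / (2 * 4 ^ DIM('a))) ^ Suc j)"
      by (simp add: ac_simps)
  qed
  ultimately have "AE \<omega> in M. \<forall>\<^sub>F j in sequentially. \<omega> \<in> space M - E j"
    by (intro borel_cantelli_AE1) (auto simp: emeasure_eq_measure)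
  then show ?thesis
    by eventually_elim (auto elim!: eventually_mono simp: E_def F_def)
qed

lemma dyadic_net_step_in_links:
  assumes "t \<in> T"
  shows "(dyadic_net T j t, dyadic_net T (Suc j) t) \<in> links j"
proof -
  have "dist (dyadic_net T j t) (dyadic_net T (Suc j) t) \<le> dist t (dyadic_net T j t) + dist t (dyadic_net T (Suc j) t)"
    by (rule dist_triangle3)
  also have "\<dots> \<le> 2 * DIM('a) / 2 ^ j + 2 * DIM('a) / 2 ^ Suc j"
    using assms by (intro add_mono dist_dyadic_net_le)
  also have "\<dots> \<le> link_radius j"
    unfolding link_radius_def by (simp add: field_simps)
  finally show ?thesis
    unfolding links_def using assms by auto
qed

lemma dyadic_net_near_in_links:
  assumes "t \<in> T" "t' \<in> T" "dist t t' \<le> 1 / 2 ^ j"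
  shows "(dyadic_net T j t, dyadic_net T j t') \<in> links j"
proof -
  have "dist (dyadic_net T j t) (dyadic_net T j t')
      \<le> dist t (dyadic_net T j t) + dist t t' + dist t' (dyadic_net T j t')"
    using dist_triangle3[of "dyadic_net T j t" "dyadic_net T j t'" t]
      dist_triangle[of t "dyadic_net T j t'" t'] by linarith
  also have "\<dots> \<le> 2 * DIM('a) / 2 ^ j + 1 / 2 ^ j + 2 * DIM('a) / 2 ^ j"
    using assms by (intro add_mono dist_dyadic_net_le)
  also have "\<dots> = link_radius j"
    unfolding link_radius_def by (simp add: field_simps)
  finally show ?thesis
    unfolding links_def using assms by auto
qed

lemma links_in_T: "p \<in> links j \<Longrightarrow> fst p \<in> T \<and> snd p \<in> T"
  unfolding links_def by (auto simp: dyadic_net(1))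

lemma links_card_le:
  obtains K where "\<And>j. finite (links j)" "\<And>j. real (card (links j)) \<le> K * (4 ^ DIM('a)) ^ Suc j"
proof -
  obtain K where fin: "\<And>j. finite (dyadic_net T j ` T)"
    and card: "\<And>j. real (card (dyadic_net T j ` T)) \<le> K * (2 ^ DIM('a)) ^ j"
    using dyadic_net_image_card_le[OF bounded_T] by blast
  define N where "N j = dyadic_net T j ` T \<union> dyadic_net T (Suc j) ` T" for j
  have links_sub: "links j \<subseteq> N j \<times> N j" for j
    unfolding links_def N_def by auto
  have finN: "finite (N j)" for j
    unfolding N_def using fin by simp
  have card_N: "real (card (N j)) \<le> 2 * K * (2 ^ DIM('a)) ^ Suc j" for j
  proof -
    have "real (card (N j)) \<le> real (card (dyadic_net T j ` T)) + real (card (dyadic_net T (Suc j) ` T))"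
      unfolding N_def using card_Un_le of_nat_mono by fastforce
    also have "\<dots> \<le> K * (2 ^ DIM('a)) ^ j + K * (2 ^ DIM('a)) ^ Suc j"
      by (intro add_mono card)
    also have "K * (2 ^ DIM('a)) ^ j \<le> K * (2 ^ DIM('a)) ^ Suc j"
      using card[of 0] by (intro mult_left_mono power_increasing) auto
    finally show ?thesis by simp
  qed
  have "real (card (links j)) \<le> 4 * K\<^sup>2 * (4 ^ DIM('a)) ^ Suc j" for j
  proof -
    have "real (card (links j)) \<le> real (card (N j)) * real (card (N j))"
      using card_mono[OF finite_cartesian_product[OF finN finN] links_sub[of j]]
      by (simp add: card_cartesian_product flip: of_nat_mult)
    also have "\<dots> \<le> (2 * K * (2 ^ DIM('a)) ^ Suc j) * (2 * K * (2 ^ DIM('a)) ^ Suc j)"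
      using card_N[of j] by (intro mult_mono) auto
    also have "\<dots> = 4 * K\<^sup>2 * (2 ^ DIM('a) * 2 ^ DIM('a)) ^ Suc j"
      by (simp add: power2_eq_square power_mult_distrib)
    also have "(2 ^ DIM('a) * 2 ^ DIM('a) :: real) = 4 ^ DIM('a)"
      by (simp flip: power_mult_distrib)
    finally show ?thesis .
  qed
  moreover have "finite (links j)" for j
    using finite_subset[OF links_sub finite_cartesian_product[OF finN finN]] .
  ultimately show thesis
    using that by blast
qed

lemma links_finite: "finite (links j)"
  using links_card_le by metis

lemma AE_eventually_links:
  "AE \<omega> in M. \<forall>\<^sub>F j in sequentially. \<forall>(u, v)\<in>links j. \<bar>Z u \<omega> - Z v \<omega>\<bar> < chain_level j"
proof (rule AE_eventually_increments_lt[OF links_finite])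
  show "u \<in> T \<and> v \<in> T \<and> dist u v \<le> link_radius j" if "(u, v) \<in> links j" for u v j
    using that links_in_T[OF that] unfolding links_def by auto
  obtain K where card: "\<And>j. real (card (links j)) \<le> K * (4 ^ DIM('a)) ^ Suc j"
    using links_card_le by blast
  have "summable (\<lambda>j. K * (1 / 2 :: real) ^ Suc j)"
    by (intro summable_mult) (simp add: summable_Suc_iff)
  then show "summable (\<lambda>j. real (card (links j)) * (1 / (2 * 4 ^ DIM('a))) ^ Suc j)"
  proof (rule summable_comparison_test')
    fix j
    have "real (card (links j)) * (1 / (2 * 4 ^ DIM('a))) ^ Suc j
        \<le> K * (4 ^ DIM('a)) ^ Suc j * (1 / (2 * 4 ^ DIM('a))) ^ Suc j"
      using card[of j] by (intro mult_right_mono) auto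
    also have "\<dots> = K * (1 / 2) ^ Suc j"
      by (simp add: power_mult_distrib[symmetric] mult.assoc)
    finally show "norm (real (card (links j)) * (1 / (2 * 4 ^ DIM('a))) ^ Suc j) \<le> K * (1 / 2) ^ Suc j"
      by simp
  qed
qed

lemma AE_eventually_dyadic_net_close:
  assumes "t \<in> T"
  shows "AE \<omega> in M. \<forall>\<^sub>F j in sequentially. \<bar>Z (dyadic_net T j t) \<omega> - Z t \<omega>\<bar> < chain_level j"
proof -
  have "AE \<omega> in M. \<forall>\<^sub>F j in sequentially. \<forall>(u, v)\<in>{(dyadic_net T j t, t)}. \<bar>Z u \<omega> - Z v \<omega>\<bar> < chain_level j"
  proof (rule AE_eventually_increments_lt)
    show "u \<in> T \<and> v \<in> T \<and> dist u v \<le> link_radius j" if "(u, v) \<in> {(dyadic_net T j t, t)}" for u v j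
    proof -
      have "dist t (dyadic_net T j t) \<le> link_radius j"
        using dist_dyadic_net_le[OF assms, of j] unfolding link_radius_def
        by (rule order_trans) (simp add: divide_right_mono)
      then show ?thesis using that assms dyadic_net(1) by (auto simp: dist_commute)
    qed
    show "summable (\<lambda>j. real (card {(dyadic_net T j t, t)}) * (1 / (2 * 4 ^ DIM('a))) ^ Suc j)"
      using summable_geometric[of "1 / (2 * 4 ^ DIM('a)) :: real"] link_base_gt_1
      by (simp add: summable_Suc_iff)
  qed simp
  then show ?thesis by simp
qed

definition good_set :: "'b set" where
  "good_set = {\<omega>\<in>space M. \<forall>\<^sub>F j in sequentially. \<forall>(u, v)\<in>links j. \<bar>Z u \<omega> - Z v \<omega>\<bar> < chain_level j}"

definition modification :: "'a \<Rightarrow> 'b \<Rightarrow> real" where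
  "modification t \<omega> = (if \<omega> \<in> good_set then lim (\<lambda>j. Z (dyadic_net T j t) \<omega>) else 0)"

lemma good_set_sets: "good_set \<in> sets M"
proof -
  have [measurable]: "Measurable.pred M (\<lambda>\<omega>. \<forall>p\<in>links j. \<bar>Z (fst p) \<omega> - Z (snd p) \<omega>\<bar> < chain_level j)" for j
  proof (rule pred_intros_finite(3)[OF links_finite])
    fix p assume "p \<in> links j"
    then have [measurable]: "Z (fst p) \<in> borel_measurable M" "Z (snd p) \<in> borel_measurable M"
      using Z_measurable links_in_T by auto
    show "Measurable.pred M (\<lambda>\<omega>. \<bar>Z (fst p) \<omega> - Z (snd p) \<omega>\<bar> < chain_level j)"
      by measurable
  qed
  have "good_set = {\<omega>\<in>space M. \<exists>K. \<forall>j. K \<le> j \<longrightarrow> (\<forall>p\<in>links j. \<bar>Z (fst p) \<omega> - Z (snd p) \<omega>\<bar> < chain_level j)}"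
    unfolding good_set_def eventually_sequentially by (simp add: case_prod_beta)
  also have "\<dots> \<in> sets M"
    by measurable
  finally show ?thesis .
qed

lemma AE_good_set: "AE \<omega> in M. \<omega> \<in> good_set"
  using AE_space AE_eventually_links by eventually_elim (simp add: good_set_def)

lemma continuous_on_modification: "continuous_on T (\<lambda>t. modification t \<omega>)"
proof (cases "\<omega> \<in> good_set")
  case True
  then obtain K where "\<forall>j\<ge>K. \<forall>(u, v)\<in>links j. \<bar>Z u \<omega> - Z v \<omega>\<bar> < chain_level j"
    unfolding good_set_def eventually_sequentially by auto
  then have K: "\<bar>Z u \<omega> - Z v \<omega>\<bar> < chain_level j" if "K \<le> j" "(u, v) \<in> links j" for j u v
    using that by force
  have "continuous_on T (\<lambda>t. lim (\<lambda>j. Z (dyadic_net T j t) \<omega>))"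
  proof (rule continuous_on_lim_chaining[OF summable_chain_level chain_level_nonneg])
    show "\<bar>Z (dyadic_net T j t) \<omega> - Z (dyadic_net T (Suc j) t) \<omega>\<bar> \<le> chain_level j"
      if "K \<le> j" "t \<in> T" for j t
      using K[OF that(1) dyadic_net_step_in_links[OF that(2)]] by simp
    show "\<bar>Z (dyadic_net T j t) \<omega> - Z (dyadic_net T j t') \<omega>\<bar> \<le> chain_level j"
      if "K \<le> j" "t \<in> T" "t' \<in> T" "dist t t' \<le> 1 / 2 ^ j" for j t t'
      using K[OF that(1) dyadic_net_near_in_links[OF that(2-4)]] by simp
  qed simp
  then show ?thesis
    using True by (simp add: modification_def)
qed (simp add: modification_def)

lemma modification_measurable: "t \<in> T \<Longrightarrow> modification t \<in> borel_measurable M"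
proof -
  assume t: "t \<in> T"
  have [measurable]: "Z (dyadic_net T j t) \<in> borel_measurable M" for j
    using Z_measurable dyadic_net(1)[OF t] by blast
  have [measurable]: "good_set \<in> sets M"
    by (rule good_set_sets)
  show ?thesis
    unfolding modification_def by measurable
qed

lemma AE_modification_eq:
  assumes "t \<in> T"
  shows "AE \<omega> in M. modification t \<omega> = Z t \<omega>"
  using AE_good_set AE_eventually_dyadic_net_close[OF assms]
proof eventually_elim
  case (elim \<omega>)
  have "(\<lambda>j. Z (dyadic_net T j t) \<omega> - Z t \<omega>) \<longlonglongrightarrow> 0"
  proof (rule Lim_null_comparison)
    show "\<forall>\<^sub>F j in sequentially. norm (Z (dyadic_net T j t) \<omega> - Z t \<omega>) \<le> chain_level j"
      using elim(2) by eventually_elim simp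
    show "chain_level \<longlonglongrightarrow> 0"
      by (rule summable_LIMSEQ_zero[OF summable_chain_level])
  qed
  then have "(\<lambda>j. Z (dyadic_net T j t) \<omega>) \<longlonglongrightarrow> Z t \<omega>"
    by (simp add: Lim_null[symmetric])
  then show ?case
    using elim(1) by (simp add: modification_def limI)
qed

end

theorem theorem5:
  fixes T :: "'a::euclidean_space set"
    and C :: "'a \<Rightarrow> 'a \<Rightarrow> real"
    and M_C \<alpha> :: real
    and lam :: "nat \<Rightarrow> real"
    and \<phi> :: "nat \<Rightarrow> 'a \<Rightarrow> real"
    and M :: "'b measure"
    and Zs :: "nat \<Rightarrow> 'b \<Rightarrow> real"
    and Z :: "'a \<Rightarrow> 'b \<Rightarrow> real"
  assumes T_compact: "compact T"
    and T_pos: "emeasure lborel T > 0"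
    and C_sym: "\<forall>s\<in>T. \<forall>t\<in>T. C s t = C t s"
    and C_psd: "psd_kernel T C"
    and M_C_pos: "M_C > 0"
    and alpha: "0 < \<alpha>" "\<alpha> \<le> 1"
    and C_hoelder: "\<forall>t1\<in>T. \<forall>t2\<in>T. \<forall>s\<in>T. \<bar>C t1 s - C t2 s\<bar> \<le> M_C * norm (t1 - t2) powr \<alpha>"
    and lam_nonneg: "\<forall>j. lam j \<ge> 0"
    and \<phi>_cont: "\<forall>j. continuous_on T (\<phi> j)"
    and \<phi>_orthonormal: "\<forall>i j. (LINT t:T|lborel. \<phi> i t * \<phi> j t) = (if i = j then 1 else 0)"
    and eigen: "\<forall>j. \<forall>s\<in>T. (LINT t:T|lborel. C s t * \<phi> j t) = lam j * \<phi> j s"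
    and mercer: "\<forall>s\<in>T. \<forall>t\<in>T. (\<lambda>j. lam j * \<phi> j s * \<phi> j t) sums C s t"
    and M_prob: "prob_space M"
    and Zs_indep: "prob_space.indep_vars M (\<lambda>_. borel) Zs UNIV"
    and Zs_laplace: "\<forall>j. distributed M lborel (Zs j) (\<lambda>x. ennreal (laplace_density x))"
    and Z_meas: "\<forall>t\<in>T. Z t \<in> borel_measurable M"
    and Z_L2: "\<forall>t\<in>T. (\<lambda>n. \<integral>\<^sup>+ \<omega>. ennreal ((Z t \<omega> - (\<Sum>j<n. sqrt (lam j) * Zs j \<omega> * \<phi> j t))\<^sup>2) \<partial>M)
                 \<longlonglongrightarrow> 0"
  shows "\<exists>Zt :: 'a \<Rightarrow> 'b \<Rightarrow> real.
           (\<forall>\<omega>\<in>space M. continuous_on T (\<lambda>t. Zt t \<omega>)) \<and>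
           (\<forall>t\<in>T. Zt t \<in> borel_measurable M \<and>
                   measure M {\<omega>\<in>space M. Zt t \<omega> = Z t \<omega>} = 1)"
proof -
  interpret prob_space M by (rule M_prob)
  have increment_tail: "prob {\<omega>\<in>space M. x \<le> \<bar>Z u \<omega> - Z v \<omega>\<bar>} \<le> 2 * exp 1 * exp (- x / \<sigma>)"
    if "u \<in> T" "v \<in> T" "0 < \<sigma>" "2 * M_C * dist u v powr \<alpha> \<le> \<sigma>\<^sup>2" for u v \<sigma> x
  proof (rule laplace_series_increment_tail[OF Zs_indep Zs_laplace _ _ _ lam_nonneg])
    show "(\<lambda>j. lam j * (\<phi> j u - \<phi> j v)\<^sup>2) sums (C u u - 2 * C u v + C v v)"
      using mercer that(1,2) by (rule mercer_increment_sums)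
    show "C u u - 2 * C u v + C v v \<le> \<sigma>\<^sup>2"
      using hoelder_kernel_increment_le[OF C_sym C_hoelder that(1,2)] that(4) by linarith
  qed (use that Z_meas Z_L2 in auto)
  interpret subexponential_increments M T Z "2 * exp 1" "2 * M_C" \<alpha>
    using T_compact M_C_pos alpha increment_tail Z_meas
    by unfold_locales (auto simp: compact_imp_bounded)
  have "measure M {\<omega>\<in>space M. modification t \<omega> = Z t \<omega>} = 1" if "t \<in> T" for t
  proof -
    have [measurable]: "modification t \<in> borel_measurable M" "Z t \<in> borel_measurable M"
      using modification_measurable Z_meas that by auto
    show ?thesis
      using AE_modification_eq[OF that] by (subst prob_Collect_eq_1) simp_all
  qed
  then show ?thesis
    using continuous_on_modification modification_measurable by blast
qed

end
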